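(* For any $n\ge 1$, the map $\rho$ is an isomorphism of posets from $\mathsf{F}(n)$ (with the dexter order) to $(\mathsf{Tr}(n),\preccurlyeq)$.
   Context: A Dyck path of size $m$ is encoded as a word of length $2m$ in $\{0,1\}$ ($1$ = north-east step, $0$ = south-east step) whose prefixes all contain at least as many $1$'s as $0$'s and which has $m$ letters of each kind. A Dyck path $d$ is primitive if whenever $d=xy$ with $x,y$ Dyck paths, $x$ or $y$ is empty. A factor $x$ of $d$ (i.e. $d=pxs$) is a subpath if $x$ is a Dyck path. A subpath $x$ of $d$ is movable if $x$ is primitive and $d=p\,1\,0^{m}\,x\,s$ with $m>0$ and either $s$ empty or $s$ starting with $1$. For such a decomposition and any $\alpha,\beta$ with $\alpha+\beta=m$, $\beta>0$, set $d_{\alpha,\beta}:=p\,1\,0^{\alpha}\,x\,0^{\beta}\,s$. The dexter covering relation on Dyck paths of size $m$ is: $d$ is covered by $d'$ iff $d'=d_{\alpha,\beta}$ for some movable subpath $x$ of $d$ and such $\alpha,\beta$; the dexter order is its reflexive–transitive closure. For $n\ge1$, $\mathsf{F}(n)$ is the interval of Dyck paths of size $n+2$ between $1100(10)^n$ and $1\,1^n\,0^n\,100$ for the dexter order. A valley is a factor $01$, and its height is the ordinate of the point between the $0$ and the $1$. The map $\rho$ on $\mathsf{F}(n)$: reading $d$ from left to right, keep a counter $N_2$ (initially $0$) and build a word $u$ (initially empty): (i) each time two consecutive letters $1$ are read in $d$, except the first two letters of $d$, add $1$ to $N_2$; (ii) each time a valley of height $h$ is read, append $h\,2^{N_2}$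 to $u$ and reset $N_2$ to $0$. Then $\rho(d)$ is the final $u$. A triword of size $n$ is a word $u=u_1\cdots u_n$ with $u_i\in\{0,1,2\}$, $u_1\ne 2$, and such that $u_i=0$ implies $u_j\neq 1$ for all $j>i$; $\mathsf{Tr}(n)$ is their set, ordered componentwise: $u\preccurlyeq v$ iff $u_i\le v_i$ for all $i$. *)

theory Defs
  imports Main
begin

text \<open>Dyck paths are encoded as lists of naturals over the alphabet {0,1}
  (1 = north-east step, 0 = south-east step).\<close>

definition dyck :: "nat list \<Rightarrow> bool" where
  "dyck w \<longleftrightarrow> set w \<subseteq> {0,1} \<and> count_list w 1 = count_list w 0 \<and>
     (\<forall>k \<le> length w. count_list (take k w) 0 \<le> count_list (take k w) 1)"

definition primitive :: "nat list \<Rightarrow> bool" where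
  "primitive d \<longleftrightarrow> dyck d \<and>
     (\<forall>x y. d = x @ y \<and> dyck x \<and> dyck y \<longrightarrow> x = [] \<or> y = [])"

definition dexter_cover :: "nat list \<Rightarrow> nat list \<Rightarrow> bool" where
  "dexter_cover d d' \<longleftrightarrow> dyck d \<and>
     (\<exists>p m x s \<alpha> \<beta>. d = p @ [1] @ replicate m 0 @ x @ s \<and> m > 0 \<and> primitive x \<and>
        (s = [] \<or> hd s = 1) \<and> \<alpha> + \<beta> = m \<and> \<beta> > 0 \<and>
        d' = p @ [1] @ replicate \<alpha> 0 @ x @ replicate \<beta> 0 @ s)"

definition dexter_le :: "nat list \<Rightarrow> nat list \<Rightarrow> bool" where
  "dexter_le = dexter_cover\<^sup>*\<^sup>*"

definition F_bot :: "nat \<Rightarrow> nat list" where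
  "F_bot n = [1,1,0,0] @ concat (replicate n [1,0])"

definition F_top :: "nat \<Rightarrow> nat list" where
  "F_top n = [1] @ replicate n 1 @ replicate n 0 @ [1,0,0]"

definition F :: "nat \<Rightarrow> nat list set" where
  "F n = {d. dyck d \<and> length d = 2 * (n + 2) \<and> dexter_le (F_bot n) d \<and> dexter_le d (F_top n)}"

definition height :: "nat list \<Rightarrow> nat" where
  "height w = count_list w 1 - count_list w 0"

text \<open>One reading step of rho, at position i (0-indexed, i \<ge> 1), i.e. when
  letter d!i is read; the state is (N2, u).\<close>
definition rho_step :: "nat list \<Rightarrow> nat \<Rightarrow> nat \<times> nat list \<Rightarrow> nat \<times> nat list" where
  "rho_step d i st =
     (let (N, u) = st in
      if 2 \<le> i \<and> d ! (i - 1) = 1 \<and> d ! i = 1 then (N + 1, u)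
      else if d ! (i - 1) = 0 \<and> d ! i = 1
        then (0, u @ [height (take i d)] @ replicate N 2)
      else (N, u))"

definition rho :: "nat list \<Rightarrow> nat list" where
  "rho d = snd (fold (rho_step d) [1..<length d] (0, []))"

definition Tr :: "nat \<Rightarrow> nat list set" where
  "Tr n = {u. length u = n \<and> set u \<subseteq> {0,1,2} \<and> u ! 0 \<noteq> 2 \<and>
              (\<forall>i j. i < j \<and> j < n \<and> u ! i = 0 \<longrightarrow> u ! j \<noteq> 1)}"

definition tr_le :: "nat list \<Rightarrow> nat list \<Rightarrow> bool" where
  "tr_le u v \<longleftrightarrow> length u = length v \<and> (\<forall>i < length u. u ! i \<le> v ! i)"

end

theory Submission
  imports Defs
begin

text \<open>Read a path through its code: for every up step, 2 if it follows an up step, and otherwise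
  the height of the next valley (0 if there is none).  A dexter cover moves a primitive subpath
  to the left across some down steps; this only raises valleys and can turn the first step of an
  ascent into a double rise, so codes grow along the dexter order.  The top path of \<open>F(n)\<close> has
  no valley of height 2, and no valley of height 1 once it has touched the ground; this property
  is inherited downwards, so the code of a path of \<open>F(n)\<close> is a triword padded by a leading
  double rise and a final 0.  Conversely every triword is the code of a path, on which \<open>rho\<close>
  returns the triword, and raising one letter of a triword (from 0 to 1, or to 2) is a single
  dexter cover.\<close>

lemma split_replicate_prefix:
  obtains j rest where "xs = replicate j x @ rest" "rest = [] \<or> hd rest \<noteq> x"
proof -
  have "takeWhile (\<lambda>c. c = x) xs = replicate (length (takeWhile (\<lambda>c. c = x) xs)) x"
    by (metis (mono_tags, lifting) replicate_length_same set_takeWhileD)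
  moreover have "dropWhile (\<lambda>c. c = x) xs = [] \<or> hd (dropWhile (\<lambda>c. c = x) xs) \<noteq> x"
    using hd_dropWhile by blast
  ultimately show thesis using that by (metis takeWhile_dropWhile_id)
qed

lemma list_all2_first_difference:
  assumes "list_all2 P xs ys" "xs \<noteq> ys"
  obtains B a R b R'
    where "xs = B @ a # R" "ys = B @ b # R'" "a \<noteq> b" "P a b" "list_all2 P R R'"
  using assms
proof (induction arbitrary: thesis rule: list_all2_induct)
  case (Cons x xs y ys)
  show ?case
  proof (cases "x = y")
    case True
    then show ?thesis using Cons by (metis append_Cons)
  next
    case False
    then show ?thesis using Cons.prems(1)[of "[]"] Cons.hyps by simp
  qed
qed simp

lemma sum_list_mono_list_all2:
  "list_all2 (\<le>) xs ys \<Longrightarrow> sum_list xs \<le> sum_list (ys :: 'a :: ordered_comm_monoid_add list)"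
  by (induction rule: list_all2_induct) (auto intro: add_mono)

section \<open>Levels of words\<close>

definition rise :: "nat \<Rightarrow> int" where
  "rise c = (if c = 1 then 1 else -1)"

fun level :: "nat list \<Rightarrow> int" where
  "level [] = 0"
| "level (c # w) = rise c + level w"

fun stays_above :: "int \<Rightarrow> nat list \<Rightarrow> int \<Rightarrow> bool" where
  "stays_above h [] m \<longleftrightarrow> m \<le> h"
| "stays_above h (c # w) m \<longleftrightarrow> m \<le> h \<and> stays_above (h + rise c) w m"

lemma level_append [simp]: "level (a @ b) = level a + level b"
  by (induction a) auto

lemma level_replicate_0 [simp]: "level (replicate k 0) = - int k"
  by (induction k) (auto simp: rise_def)

lemma level_replicate_1 [simp]: "level (replicate k 1) = int k"
  by (induction k) (auto simp: rise_def)

lemma level_replicate_Suc_0 [simp]: "level (replicate k (Suc 0)) = int k"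
  using level_replicate_1 by simp

lemma level_count:
  "set w \<subseteq> {0,1} \<Longrightarrow> level w = int (count_list w 1) - int (count_list w 0)"
  by (induction w) (auto simp: rise_def)

lemma stays_above_iff_take:
  "stays_above h w m \<longleftrightarrow> (\<forall>k \<le> length w. m \<le> h + level (take k w))"
proof (induction w arbitrary: h)
  case (Cons c w)
  show ?case
  proof
    assume A: "stays_above h (c # w) m"
    show "\<forall>k \<le> length (c # w). m \<le> h + level (take k (c # w))"
    proof (intro allI impI)
      fix k assume "k \<le> length (c # w)"
      then show "m \<le> h + level (take k (c # w))"
        using A Cons.IH[of "h + rise c"] by (cases k) (auto simp: algebra_simps)
    qed
  next
    assume A: "\<forall>k \<le> length (c # w). m \<le> h + level (take k (c # w))"
    have "\<forall>k \<le> length w. m \<le> h + rise c + level (take k w)"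
      using A[rule_format, of "Suc k" for k] by (simp add: algebra_simps)
    then show "stays_above h (c # w) m"
      using A[rule_format, of 0] Cons.IH by simp
  qed
qed simp

lemma dyck_iff_level: "dyck w \<longleftrightarrow> set w \<subseteq> {0,1} \<and> level w = 0 \<and> stays_above 0 w 0"
proof (cases "set w \<subseteq> {0,1}")
  case True
  have "set (take k w) \<subseteq> {0,1}" for k
    using True by (meson order_trans set_take_subset)
  then have prefix: "count_list (take k w) 0 \<le> count_list (take k w) 1 \<longleftrightarrow> 0 \<le> level (take k w)" for k
    using level_count by simp
  have total: "count_list w 1 = count_list w 0 \<longleftrightarrow> level w = 0"
    using level_count[OF True] by simp
  show ?thesis
    unfolding dyck_def stays_above_iff_take prefix total using True by simp
qed (simp add: dyck_def)

lemma stays_above_start: "stays_above h w m \<Longrightarrow> m \<le> h"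
  by (cases w) auto

lemma stays_above_append:
  "stays_above h (a @ b) m \<longleftrightarrow> stays_above h a m \<and> stays_above (h + level a) b m"
  by (induction a arbitrary: h) (auto simp: algebra_simps dest: stays_above_start)

lemma stays_above_mono: "stays_above h w m \<Longrightarrow> m' \<le> m \<Longrightarrow> stays_above h w m'"
  by (induction w arbitrary: h) auto

lemma stays_above_shift: "stays_above (h + k) w (m + k) = stays_above h w m"
  unfolding stays_above_iff_take by (simp add: algebra_simps)

lemma stays_above_replicate_0: "stays_above h (replicate k 0) m \<longleftrightarrow> m \<le> h - int k"
proof (induction k arbitrary: h)
  case (Suc k)
  have "stays_above h (replicate (Suc k) 0) m \<longleftrightarrow> m \<le> h \<and> stays_above (h - 1) (replicate k 0) m"
    by (simp add: rise_def)
  then show ?case unfolding Suc.IH by linarith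
qed simp

lemma stays_above_replicate_1: "stays_above h (replicate k 1) m \<longleftrightarrow> m \<le> h"
proof (induction k arbitrary: h)
  case (Suc k)
  have "stays_above h (replicate (Suc k) 1) m \<longleftrightarrow> m \<le> h \<and> stays_above (h + 1) (replicate k 1) m"
    by (simp add: rise_def)
  then show ?case unfolding Suc.IH by linarith
qed simp

section \<open>Dyck paths and dexter covers\<close>

lemma dyck_Cons: "dyck (c # w) \<Longrightarrow> c = 1"
  unfolding dyck_iff_level by (auto simp: rise_def split: if_splits dest: stays_above_start)

lemma dyck_last: "dyck x \<Longrightarrow> x \<noteq> [] \<Longrightarrow> last x = 0"
proof -
  assume D: "dyck x" and "x \<noteq> []"
  then have x: "x = butlast x @ [last x]" and "last x \<in> {0,1}"
    using last_in_set unfolding dyck_iff_level by auto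
  have "stays_above 0 (butlast x @ [last x]) 0" "level (butlast x @ [last x]) = 0"
    using D x unfolding dyck_iff_level by metis+
  then have "0 \<le> level (butlast x)" "level (butlast x) + rise (last x) = 0"
    by (auto simp: stays_above_append dest: stays_above_start)
  then show ?thesis using \<open>last x \<in> {0,1}\<close> by (auto simp: rise_def split: if_splits)
qed

lemma dyck_take_drop:
  assumes "dyck x" "level (take j x) = 0"
  shows "dyck (take j x)" "dyck (drop j x)"
proof -
  have x: "set x \<subseteq> {0,1}" "level x = 0" "stays_above 0 x 0"
    using assms(1) unfolding dyck_iff_level by auto
  then have "stays_above 0 (take j x) 0" "stays_above 0 (drop j x) 0" "level (drop j x) = 0"
    using assms(2) stays_above_append[of 0 "take j x" "drop j x" 0]
      level_append[of "take j x" "drop j x"] by simp_all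
  then show "dyck (take j x)" "dyck (drop j x)"
    unfolding dyck_iff_level using x(1) assms(2)
    by (meson order_trans set_take_subset set_drop_subset)+
qed

lemma primitive_dyck: "primitive x \<Longrightarrow> dyck x"
  unfolding primitive_def by simp

lemma primitive_level_take:
  assumes "primitive x" "0 < j" "j < length x"
  shows "1 \<le> level (take j x)"
proof (rule ccontr)
  assume "\<not> 1 \<le> level (take j x)"
  moreover have "0 \<le> level (take j x)"
    using primitive_dyck[OF assms(1)] assms unfolding dyck_iff_level stays_above_iff_take by simp
  ultimately have "level (take j x) = 0" by simp
  then have "dyck (take j x)" "dyck (drop j x)"
    using dyck_take_drop primitive_dyck[OF assms(1)] by blast+
  moreover have "x = take j x @ drop j x" by simp
  ultimately have "take j x = [] \<or> drop j x = []"
    using assms(1) unfolding primitive_def by blast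
  then show False using assms(2,3) by auto
qed

lemma primitive_shape:
  assumes "primitive x" "x \<noteq> []"
  obtains y where "x = 1 # y @ [0]" "stays_above 0 y 0" "level y = 0"
proof -
  have D: "dyck x" using primitive_dyck[OF assms(1)] .
  obtain c x1 where x: "x = c # x1" using assms(2) by (cases x) auto
  have "c = 1" using dyck_Cons D x by simp
  moreover have "level x = 0" using D unfolding dyck_iff_level by simp
  ultimately have "x1 \<noteq> []" using x by (auto simp: rise_def)
  then obtain y e where x1: "x1 = y @ [e]" by (metis append_butlast_last_id)
  have "e = 0" using dyck_last[OF D assms(2)] x x1 by simp
  then have xy: "x = 1 # y @ [0]" using x x1 \<open>c = 1\<close> by simp
  have "level y = 0" using \<open>level x = 0\<close> xy by (simp add: rise_def)
  moreover have "stays_above 0 y 0" unfolding stays_above_iff_take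
  proof (intro allI impI)
    fix k assume k: "k \<le> length y"
    have "1 \<le> level (take (Suc k) x)"
      using primitive_level_take[OF assms(1), of "Suc k"] k xy by simp
    moreover have "take (Suc k) x = 1 # take k y" using xy k by simp
    ultimately show "0 \<le> 0 + level (take k y)" by (simp add: rise_def)
  qed
  ultimately show thesis using xy that by blast
qed

lemma primitive_pyramid: "0 < q \<Longrightarrow> primitive (replicate q 1 @ replicate q 0)"
  (is "_ \<Longrightarrow> primitive ?x")
proof -
  assume q: "0 < q"
  have "dyck ?x"
    using stays_above_replicate_1[of 0 q 0] unfolding dyck_iff_level
    by (auto simp: stays_above_append stays_above_replicate_0)
  moreover have "level (take j ?x) > 0" if "0 < j" "j < 2 * q" for j
  proof (cases "j \<le> q")
    case True
    then show ?thesis using that by (simp add: take_append)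
  next
    case False
    then have "take j ?x = replicate q 1 @ replicate (j - q) 0"
      using that by (simp add: take_append min_def)
    then show ?thesis using that False by simp
  qed
  moreover have "a = [] \<or> b = []" if "?x = a @ b" "dyck a" for a b
  proof (rule ccontr)
    assume "\<not> (a = [] \<or> b = [])"
    then have "0 < length a" "0 < length b" by auto
    moreover have "length a + length b = 2 * q"
      using arg_cong[OF that(1), of length] by simp
    ultimately have "0 < length a" "length a < 2 * q" by linarith+
    moreover have "take (length a) ?x = a" using that(1) by simp
    moreover have "level a = 0" using that(2) unfolding dyck_iff_level by simp
    ultimately show False
      using \<open>\<And>j. 0 < j \<Longrightarrow> j < 2 * q \<Longrightarrow> level (take j ?x) > 0\<close> by (metis less_irrefl)
  qed
  ultimately show ?thesis unfolding primitive_def by blast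
qed

lemma dyck_length: "dyck w \<Longrightarrow> length w = 2 * count_list w 1"
proof -
  assume "dyck w"
  then have S: "set w \<subseteq> {0,1}" and "count_list w 1 = count_list w 0"
    unfolding dyck_def by blast+
  moreover have "length w = count_list w 0 + count_list w 1"
    using S by (induction w) auto
  ultimately show ?thesis by simp
qed

lemma dexter_coverI:
  assumes "dyck (p @ [1] @ replicate (\<alpha> + \<beta>) 0 @ x @ s)" "primitive x" "s = [] \<or> hd s = 1"
    and "0 < \<beta>"
  shows "dexter_cover (p @ [1] @ replicate (\<alpha> + \<beta>) 0 @ x @ s)
           (p @ [1] @ replicate \<alpha> 0 @ x @ replicate \<beta> 0 @ s)"
  unfolding dexter_cover_def using assms by blast

lemma dexter_cover_shape:
  assumes "dexter_cover d d'"
  obtains P \<beta> x s where "d = P @ replicate \<beta> 0 @ x @ s" "d' = P @ x @ replicate \<beta> 0 @ s"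
    "0 < \<beta>" "primitive x" "s = [] \<or> hd s = 1" "dyck d"
proof -
  obtain p m x s \<alpha> \<beta> where o: "d = p @ [1] @ replicate m 0 @ x @ s" "primitive x"
    "s = [] \<or> hd s = 1" "\<alpha> + \<beta> = m" "\<beta> > 0"
    "d' = p @ [1] @ replicate \<alpha> 0 @ x @ replicate \<beta> 0 @ s" "dyck d"
    using assms unfolding dexter_cover_def by blast
  have "d = (p @ [1] @ replicate \<alpha> 0) @ replicate \<beta> 0 @ x @ s"
    using o(1) unfolding o(4)[symmetric] replicate_add by simp
  moreover have "d' = (p @ [1] @ replicate \<alpha> 0) @ x @ replicate \<beta> 0 @ s" using o(6) by simp
  ultimately show thesis using o that by blast
qed

section \<open>The up-step code of a path\<close>

fun last_up :: "bool \<Rightarrow> nat list \<Rightarrow> bool" where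
  "last_up u [] = u"
| "last_up u (c # w) = last_up (c = 1) w"

text \<open>For a walk \<open>w\<close> read from height \<open>h\<close>, where \<open>u\<close> tells whether the letter read before
  \<open>w\<close> was an up step, \<open>next_valley h u w\<close> is the height of the first valley and
  \<open>up_steps h u w\<close> records, for every up step, whether it follows an up step and the height
  of the first valley after it.\<close>

fun next_valley :: "int \<Rightarrow> bool \<Rightarrow> nat list \<Rightarrow> int option" where
  "next_valley h u [] = None"
| "next_valley h u (c # w) =
     (if c = 1 then (if u then next_valley (h + 1) True w else Some h)
      else next_valley (h - 1) False w)"

fun up_steps :: "int \<Rightarrow> bool \<Rightarrow> nat list \<Rightarrow> (bool \<times> int option) list" where
  "up_steps h u [] = []"
| "up_steps h u (c # w) =
     (if c = 1 then (u, next_valley (h + 1) True w) # up_steps (h + 1) True w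
      else up_steps (h - 1) False w)"

definition fill_valley :: "int option \<Rightarrow> bool \<times> int option \<Rightarrow> bool \<times> int option" where
  "fill_valley v e = (fst e, if snd e = None then v else snd e)"

text \<open>Paths end on the ground, so a missing next valley plays the role of a valley of height 0.\<close>

definition valley_height :: "int option \<Rightarrow> int" where
  "valley_height v = (case v of None \<Rightarrow> 0 | Some h \<Rightarrow> h)"

definition up_le :: "bool \<times> int option \<Rightarrow> bool \<times> int option \<Rightarrow> bool" where
  "up_le e e' \<longleftrightarrow> (fst e \<longrightarrow> fst e') \<and> valley_height (snd e) \<le> valley_height (snd e')"

definition up_letter :: "bool \<times> int option \<Rightarrow> nat" where
  "up_letter e = (if fst e then 2 else nat (valley_height (snd e)))"

definition code :: "nat list \<Rightarrow> nat list" where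
  "code d = map up_letter (up_steps 0 False d)"

lemma last_up_eq_last: "w \<noteq> [] \<Longrightarrow> last_up u w \<longleftrightarrow> last w = 1"
proof (induction w arbitrary: u)
  case (Cons c w)
  then show ?case by (cases w) auto
qed simp

lemma last_up_dyck: "dyck x \<Longrightarrow> x \<noteq> [] \<Longrightarrow> \<not> last_up u x"
  using last_up_eq_last dyck_last by simp

lemma next_valley_append:
  "next_valley h u (a @ b) =
     (case next_valley h u a of
        None \<Rightarrow> next_valley (h + level a) (last_up u a) b
      | Some v \<Rightarrow> Some v)"
proof (induction a arbitrary: h u)
  case (Cons c a)
  show ?case
  proof (cases "c = 1")
    case True
    then show ?thesis using Cons.IH[of "h + 1" True]
      by (cases u) (simp_all add: rise_def add.assoc split: option.splits)
  next
    case False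
    have e: "h + (level a - 1) = (h - 1) + level a" by simp
    show ?thesis
      using Cons.IH[of "h - 1" False] False by (simp add: rise_def e split: option.splits)
  qed
qed simp

lemma up_steps_append:
  "up_steps h u (a @ b) =
     map (fill_valley (next_valley (h + level a) (last_up u a) b)) (up_steps h u a) @
     up_steps (h + level a) (last_up u a) b"
proof (induction a arbitrary: h u)
  case (Cons c a)
  show ?case
  proof (cases "c = 1")
    case True
    then show ?thesis using Cons.IH[of "h + 1" True]
      by (simp add: next_valley_append fill_valley_def rise_def add.assoc split: option.splits)
  next
    case False
    have e: "h + (level a - 1) = (h - 1) + level a" by simp
    show ?thesis using Cons.IH[of "h - 1" False] False by (simp add: rise_def e)
  qed
qed simp

lemma next_valley_shift: "next_valley (h + k) u w = map_option (\<lambda>v. v + k) (next_valley h u w)"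
proof (induction w arbitrary: h u)
  case (Cons c w)
  have "h + k + 1 = (h + 1) + k" "h + k - 1 = (h - 1) + k" by simp_all
  then show ?case
    using Cons.IH[of "h + 1"] Cons.IH[of "h - 1"] by (simp only: next_valley.simps) simp
qed simp

lemma up_steps_shift:
  "up_steps (h + k) u w = map (\<lambda>e. (fst e, map_option (\<lambda>v. v + k) (snd e))) (up_steps h u w)"
proof (induction w arbitrary: h u)
  case (Cons c w)
  have "h + k + 1 = (h + 1) + k" "h + k - 1 = (h - 1) + k" by simp_all
  then show ?case using Cons.IH[of "h + 1"] Cons.IH[of "h - 1"] next_valley_shift[of "h + 1" k]
    by (simp only: up_steps.simps) simp
qed simp

lemma up_steps_flag_mono:
  "u \<longrightarrow> u' \<Longrightarrow>
   list_all2 (\<lambda>e e'. (fst e \<longrightarrow> fst e') \<and> snd e = snd e') (up_steps h u w) (up_steps h u' w)"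
  by (cases w) (auto intro: list_all2_refl)

lemma next_valley_replicate_0:
  "0 < k \<Longrightarrow> next_valley h u (replicate k 0 @ w) = next_valley (h - int k) False w"
proof (induction k arbitrary: h u)
  case (Suc k)
  then show ?case by (cases "k = 0") (simp_all add: algebra_simps)
qed simp

lemma up_steps_replicate_0:
  "0 < k \<Longrightarrow> up_steps h u (replicate k 0 @ w) = up_steps (h - int k) False w"
proof (induction k arbitrary: h u)
  case (Suc k)
  then show ?case by (cases "k = 0") (simp_all add: algebra_simps)
qed simp

lemma next_valley_ge: "stays_above h w m \<Longrightarrow> next_valley h u w = Some v \<Longrightarrow> m \<le> v"
  by (induction w arbitrary: h u) (auto simp: rise_def split: if_splits)

lemma list_all2_up_le_refl: "list_all2 up_le L L"
  by (rule list_all2_refl) (simp add: up_le_def)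

lemma list_all2_up_le_trans: "list_all2 up_le A B \<Longrightarrow> list_all2 up_le B C \<Longrightarrow> list_all2 up_le A C"
  by (rule list_all2_trans[of up_le up_le up_le]) (auto simp: up_le_def)

lemma fill_valley_mono:
  "valley_height v \<le> valley_height v' \<Longrightarrow>
   list_all2 up_le (map (fill_valley v) L) (map (fill_valley v') L)"
  by (induction L) (auto simp: fill_valley_def up_le_def)

text \<open>Moving \<open>x\<close> to the left across \<open>\<beta>\<close> down steps raises its valleys by \<open>\<beta>\<close>, and its
  first up step may come to follow an up step.\<close>

lemma up_steps_pull_left:
  assumes x: "dyck x" "x \<noteq> []" and \<beta>: "0 < \<beta>"
  shows "list_all2 up_le (up_steps h u (replicate \<beta> 0 @ x @ s))
           (up_steps h u (x @ replicate \<beta> 0 @ s))"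
proof -
  define g where "g = h - int \<beta>"
  define v where "v = next_valley g False s"
  have level_x: "level x = 0" using x(1) unfolding dyck_iff_level by simp
  have last_x: "\<not> last_up u' x" for u' using last_up_dyck[OF x] .
  have left: "up_steps h u (replicate \<beta> 0 @ x @ s) =
      map (fill_valley v) (up_steps g False x) @ up_steps g False s"
    unfolding g_def v_def
    using up_steps_replicate_0[OF \<beta>] up_steps_append[of _ False x s] level_x last_x by simp
  have right: "up_steps h u (x @ replicate \<beta> 0 @ s) =
      map (fill_valley v) (up_steps h u x) @ up_steps g False s"
    unfolding g_def v_def using up_steps_append[of h u x] level_x last_x
      up_steps_replicate_0[OF \<beta>] next_valley_replicate_0[OF \<beta>] by simp
  have shift: "up_steps h u x =
      map (\<lambda>e. (fst e, map_option (\<lambda>v. v + int \<beta>) (snd e))) (up_steps g u x)"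
    using up_steps_shift[of g "int \<beta>" u x] unfolding g_def by simp
  have "list_all2 (\<lambda>e e'. (fst e \<longrightarrow> fst e') \<and> snd e = snd e')
      (up_steps g False x) (up_steps g u x)"
    using up_steps_flag_mono by simp
  then have "list_all2 up_le
      (map (fill_valley v) (up_steps g False x)) (map (fill_valley v) (up_steps h u x))"
    unfolding shift list.rel_map by (rule list_all2_mono)
      (auto simp: up_le_def fill_valley_def valley_height_def split: option.splits)
  then show ?thesis unfolding left right using list_all2_up_le_refl by (rule list_all2_appendI)
qed

lemma next_valley_pull_left:
  assumes x: "dyck x" "x \<noteq> []" and \<beta>: "0 < \<beta>" and s: "s = [] \<or> hd s = 1"
    and ground: "h - int \<beta> + level s = 0"
  shows "valley_height (next_valley h u (replicate \<beta> 0 @ x @ s))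
           \<le> valley_height (next_valley h u (x @ replicate \<beta> 0 @ s))"
proof -
  have level_x: "level x = 0" and "stays_above 0 x 0"
    using x(1) unfolding dyck_iff_level by simp_all
  then have x_above: "stays_above h x h" using stays_above_shift[of 0 h x 0] by simp
  obtain x' where "x = 1 # x'" using x dyck_Cons by (cases x) auto
  then have left: "next_valley h u (replicate \<beta> 0 @ x @ s) = Some (h - int \<beta>)"
    using next_valley_replicate_0[OF \<beta>] by simp
  show ?thesis
  proof (cases "next_valley h u x")
    case (Some v)
    then have "next_valley h u (x @ replicate \<beta> 0 @ s) = Some v" by (simp add: next_valley_append)
    moreover have "h \<le> v" using next_valley_ge[OF x_above Some] .
    ultimately show ?thesis using left by (simp add: valley_height_def)
  next
    case None
    then have "next_valley h u (x @ replicate \<beta> 0 @ s) = next_valley (h - int \<beta>) False s"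
      using last_up_dyck[OF x] level_x next_valley_replicate_0[OF \<beta>]
      by (simp add: next_valley_append)
    then show ?thesis using left s ground by (cases s) (auto simp: valley_height_def)
  qed
qed

lemma dexter_cover_up_steps:
  assumes "dexter_cover d d'"
  shows "list_all2 up_le (up_steps 0 False d) (up_steps 0 False d')"
proof -
  obtain P \<beta> x s where d: "d = P @ replicate \<beta> 0 @ x @ s"
    and d': "d' = P @ x @ replicate \<beta> 0 @ s" and \<beta>: "0 < \<beta>" and x: "primitive x"
    and s: "s = [] \<or> hd s = 1" and "dyck d"
    using dexter_cover_shape[OF assms] by blast
  show ?thesis
  proof (cases "x = []")
    case True
    then show ?thesis using d d' list_all2_up_le_refl by simp
  next
    case False
    have "dyck x" using primitive_dyck[OF x] .
    then have "level x = 0" unfolding dyck_iff_level by simp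
    moreover have "level d = 0" using \<open>dyck d\<close> unfolding dyck_iff_level by simp
    ultimately have "level P - int \<beta> + level s = 0" using d by simp
    then show ?thesis
      using d d' up_steps_append[of 0 False P]
        list_all2_appendI[OF fill_valley_mono up_steps_pull_left]
        next_valley_pull_left \<open>dyck x\<close> False \<beta> s by simp
  qed
qed

lemma dexter_le_up_steps:
  "dexter_le d d' \<Longrightarrow> list_all2 up_le (up_steps 0 False d) (up_steps 0 False d')"
  unfolding dexter_le_def
  by (induction rule: rtranclp_induct)
    (use list_all2_up_le_refl dexter_cover_up_steps list_all2_up_le_trans in blast)+

section \<open>Triwords\<close>

fun no_one_after_zero :: "nat list \<Rightarrow> bool" where
  "no_one_after_zero [] \<longleftrightarrow> True"
| "no_one_after_zero (c # cs) \<longleftrightarrow> (c = 0 \<longrightarrow> 1 \<notin> set cs) \<and> no_one_after_zero cs"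

lemma no_one_after_zero_append:
  "no_one_after_zero (A @ B) \<longleftrightarrow>
     no_one_after_zero A \<and> no_one_after_zero B \<and> (0 \<in> set A \<longrightarrow> 1 \<notin> set B)"
  by (induction A) auto

lemma no_one_after_zero_iff_nth:
  "no_one_after_zero L \<longleftrightarrow> (\<forall>i j. i < j \<and> j < length L \<and> L ! i = 0 \<longrightarrow> L ! j \<noteq> 1)"
proof (induction L)
  case (Cons c L)
  have "(\<forall>i j. i < j \<and> j < length (c # L) \<and> (c # L) ! i = 0 \<longrightarrow> (c # L) ! j \<noteq> 1) \<longleftrightarrow>
        (c = 0 \<longrightarrow> (\<forall>j < length L. L ! j \<noteq> 1)) \<and>
        (\<forall>i j. i < j \<and> j < length L \<and> L ! i = 0 \<longrightarrow> L ! j \<noteq> 1)"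
    (is "?l \<longleftrightarrow> ?r")
  proof
    assume ?l
    then show ?r by (metis Suc_less_eq length_Cons nth_Cons_0 nth_Cons_Suc zero_less_Suc)
  next
    assume ?r
    then show ?l by (auto simp: nth_Cons less_Suc_eq_0_disj split: nat.splits)
  qed
  then show ?case using Cons.IH by (auto simp: in_set_conv_nth)
qed simp

lemma Tr_iff:
  "u \<in> Tr n \<longleftrightarrow> length u = n \<and> set u \<subseteq> {0,1,2} \<and> u ! 0 \<noteq> 2 \<and> no_one_after_zero u"
  unfolding Tr_def no_one_after_zero_iff_nth by auto

text \<open>\<open>pad u\<close> will be the code of the path of \<open>u\<close>: paths of \<open>F(n)\<close> start with a double rise,
  and no valley follows their last ascent.\<close>

definition pad :: "nat list \<Rightarrow> nat list" where
  "pad u = hd u # 2 # tl u @ [0]"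

section \<open>High valleys\<close>

fun grounded :: "int \<Rightarrow> bool \<Rightarrow> nat list \<Rightarrow> bool" where
  "grounded h r [] \<longleftrightarrow> r"
| "grounded h r (c # w) \<longleftrightarrow>
     (if c = 1 then grounded (h + 1) r w else grounded (h - 1) (r \<or> h - 1 \<le> 0) w)"

text \<open>\<open>high_valley h u r w\<close>: an ascent of \<open>w\<close> starts at height at least 2, or at height 1 after
  the path has touched the ground (which \<open>r\<close> records).  No path below \<open>F_top n\<close> has one.\<close>

fun high_valley :: "int \<Rightarrow> bool \<Rightarrow> bool \<Rightarrow> nat list \<Rightarrow> bool" where
  "high_valley h u r [] \<longleftrightarrow> False"
| "high_valley h u r (c # w) \<longleftrightarrow>
     (if c = 1 then (\<not> u \<and> (2 \<le> h \<or> (1 \<le> h \<and> r))) \<or> high_valley (h + 1) True r w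
      else high_valley (h - 1) False (r \<or> h - 1 \<le> 0) w)"

lemma high_valley_append:
  "high_valley h u r (a @ b) \<longleftrightarrow>
     high_valley h u r a \<or> high_valley (h + level a) (last_up u a) (grounded h r a) b"
proof (induction a arbitrary: h u r)
  case (Cons c a)
  show ?case
  proof (cases "c = 1")
    case True
    then show ?thesis using Cons.IH[of "h + 1" True r] by (simp add: rise_def add.assoc)
  next
    case False
    have e: "h + (level a - 1) = (h - 1) + level a" by simp
    show ?thesis using Cons.IH[of "h - 1" False] False by (simp add: rise_def e)
  qed
qed simp

lemma grounded_True: "grounded h True w"
  by (induction w arbitrary: h) auto

lemma grounded_stays_above: "stays_above h w 1 \<Longrightarrow> grounded h r w = r"
proof (induction w arbitrary: h r)
  case (Cons c w)
  then show ?case by (cases "c = 1") (auto simp: rise_def dest: stays_above_start)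
qed simp

lemma high_valley_replicate_0:
  "0 < k \<Longrightarrow>
   high_valley h u r (replicate k 0 @ w) \<longleftrightarrow> high_valley (h - int k) False (r \<or> h - int k \<le> 0) w"
proof (induction k arbitrary: h u r)
  case (Suc k)
  show ?case
  proof (cases "k = 0")
    case False
    have "high_valley h u r (replicate (Suc k) 0 @ w) \<longleftrightarrow>
        high_valley (h - 1) False (r \<or> h - 1 \<le> 0) (replicate k 0 @ w)" by simp
    also have "\<dots> \<longleftrightarrow>
        high_valley (h - 1 - int k) False ((r \<or> h - 1 \<le> 0) \<or> h - 1 - int k \<le> 0) w"
      using False by (intro Suc.IH) simp
    also have "h - 1 - int k = h - int (Suc k)" by simp
    also have "((r \<or> h - 1 \<le> 0) \<or> h - int (Suc k) \<le> 0) \<longleftrightarrow> (r \<or> h - int (Suc k) \<le> 0)" by auto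
    finally show ?thesis .
  qed simp
qed simp

lemma high_valley_replicate_1:
  "high_valley h True r (replicate k 1 @ w) \<longleftrightarrow> high_valley (h + int k) True r w"
proof (induction k arbitrary: h)
  case (Suc k)
  then show ?case by (simp add: algebra_simps)
qed simp

lemma high_valley_next_valley: "high_valley h u r w \<Longrightarrow> next_valley h u w \<noteq> None"
  by (induction w arbitrary: h u r) (auto split: if_splits)

lemma next_valley_high_valley: "next_valley h u w = Some v \<Longrightarrow> 2 \<le> v \<Longrightarrow> high_valley h u r w"
  by (induction w arbitrary: h u r) (auto split: if_splits)

text \<open>A high valley of \<open>x\<close> at height \<open>g\<close> is either the start of \<open>x\<close>, and then \<open>s\<close> starts an
  ascent just as high, or a valley inside \<open>x\<close>, which moving \<open>x\<close> up by \<open>\<beta>\<close> only raises.\<close>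

lemma high_valley_primitive_lift:
  assumes x: "primitive x" "x \<noteq> []" and g: "0 \<le> g" and \<beta>: "0 < \<beta>"
    and s: "s = [] \<or> hd s = 1" and ground: "g + level s = 0" and high: "high_valley g False r x"
  shows "high_valley (g + int \<beta>) u r' x \<or> high_valley g False r s"
proof -
  obtain y where y: "x = 1 # y @ [0]" "stays_above 0 y 0" using primitive_shape[OF x] by blast
  have "(2 \<le> g \<or> (1 \<le> g \<and> r)) \<or> high_valley (g + 1) True r (y @ [0])"
    using high y(1) by simp
  then show ?thesis
  proof
    assume first: "2 \<le> g \<or> (1 \<le> g \<and> r)"
    then obtain s' where "s = 1 # s'" using s ground by (cases s) auto
    then show ?thesis using first by simp
  next
    assume "high_valley (g + 1) True r (y @ [0])"
    then have "high_valley (g + 1) True r y" by (simp add: high_valley_append)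
    then obtain v where v: "next_valley (g + 1) True y = Some v"
      using high_valley_next_valley by blast
    have "stays_above (g + 1) y (g + 1)"
      using stays_above_shift[of 0 "g + 1" y 0] y(2) by simp
    then have "g + 1 \<le> v" using next_valley_ge v by blast
    moreover have "next_valley (g + int \<beta> + 1) True y = Some (v + int \<beta>)"
      using next_valley_shift[of "g + 1" "int \<beta>" True y] v by (simp add: algebra_simps)
    ultimately have "high_valley (g + int \<beta> + 1) True r' y"
      using next_valley_high_valley g \<beta> by fastforce
    then show ?thesis using y(1) by (simp add: high_valley_append)
  qed
qed

lemma dexter_cover_high_valley:
  assumes cover: "dexter_cover d d'" and high: "high_valley 0 False False d"
  shows "high_valley 0 False False d'"
proof -
  obtain P \<beta> x s where d: "d = P @ replicate \<beta> 0 @ x @ s"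
    and d': "d' = P @ x @ replicate \<beta> 0 @ s" and \<beta>: "0 < \<beta>" and x: "primitive x"
    and s: "s = [] \<or> hd s = 1" and "dyck d"
    using dexter_cover_shape[OF cover] by blast
  show ?thesis
  proof (cases "x = []")
    case True
    then show ?thesis using d d' high by simp
  next
    case False
    define h where "h = level P"
    define u where "u = last_up False P"
    define r where "r = grounded 0 False P"
    define g where "g = h - int \<beta>"
    define r' where "r' = (r \<or> g \<le> 0)"
    have "dyck x" using primitive_dyck[OF x] .
    then have level_x: "level x = 0" and x_above: "stays_above 0 x 0"
      and last_x: "\<And>u. \<not> last_up u x"
      using last_up_dyck False unfolding dyck_iff_level by auto
    have "level d = 0" "stays_above 0 d 0" using \<open>dyck d\<close> unfolding dyck_iff_level by auto
    then have ground: "g + level s = 0" and "0 \<le> g"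
      unfolding g_def h_def d using level_x
      by (auto simp: stays_above_append dest: stays_above_start)
    have "stays_above g x 1 \<or> r'"
      using stays_above_shift[of 0 g x 0] x_above stays_above_mono unfolding r'_def by fastforce
    then have grounded_low: "grounded g r' x = r'"
      using grounded_stays_above grounded_True by auto
    have "stays_above h x 1"
      using stays_above_shift[of 0 h x 0] x_above stays_above_mono \<open>0 \<le> g\<close> \<beta>
      unfolding g_def by fastforce
    then have grounded_high: "grounded h r x = r" by (rule grounded_stays_above)
    have "high_valley 0 False False d \<longleftrightarrow>
        high_valley 0 False False P \<or> high_valley g False r' x \<or> high_valley g False r' s"
      unfolding d using high_valley_append[of 0 False False P] high_valley_replicate_0[OF \<beta>]
        high_valley_append[of g False r' x s] level_x last_x grounded_low
      by (simp add: h_def u_def r_def g_def r'_def)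
    moreover have "high_valley 0 False False d' \<longleftrightarrow>
        high_valley 0 False False P \<or> high_valley h u r x \<or> high_valley g False r' s"
      unfolding d' using high_valley_append[of 0 False False P] high_valley_append[of h u r x]
        high_valley_replicate_0[OF \<beta>] level_x last_x grounded_high
      by (simp add: h_def u_def r_def g_def r'_def)
    moreover have "h = g + int \<beta>" unfolding g_def by simp
    ultimately show ?thesis
      using high high_valley_primitive_lift[OF x False \<open>0 \<le> g\<close> \<beta> s ground] by blast
  qed
qed

lemma dexter_le_high_valley:
  "dexter_le d d' \<Longrightarrow> high_valley 0 False False d \<Longrightarrow> high_valley 0 False False d'"
  unfolding dexter_le_def
  by (induction rule: rtranclp_induct) (auto intro: dexter_cover_high_valley)

lemma F_top_no_high_valley: "1 \<le> n \<Longrightarrow> \<not> high_valley 0 False False (F_top n)"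
  unfolding F_top_def
  using high_valley_replicate_1[of 1 False n "replicate n 0 @ [1,0,0]"]
    high_valley_replicate_0[of n "1 + int n" True False "[1,0,0]"]
  by simp

lemma up_steps_no_next_valley:
  "next_valley h u w = None \<Longrightarrow> \<forall>e \<in> set (up_steps h u w). snd e = None"
  by (induction w arbitrary: h u) (auto split: if_splits)

lemma next_valley_grounded:
  "r \<Longrightarrow> \<not> high_valley h u r w \<Longrightarrow> next_valley h u w = Some v \<Longrightarrow> v \<le> 0"
  by (induction w arbitrary: h u r) (auto split: if_splits)

lemma next_valley_le_1: "\<not> high_valley h u r w \<Longrightarrow> next_valley h u w = Some v \<Longrightarrow> v \<le> 1"
  by (induction w arbitrary: h u r) (auto split: if_splits)

lemma up_steps_grounded:
  "r \<Longrightarrow> \<not> high_valley h u r w \<Longrightarrow> \<forall>e \<in> set (up_steps h u w). valley_height (snd e) \<le> 0"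
proof (induction w arbitrary: h u r)
  case (Cons c w)
  show ?case
  proof (cases "c = 1")
    case True
    then have "\<not> high_valley (h + 1) True r w" using Cons.prems by simp
    then show ?thesis
      using Cons.IH Cons.prems(1) next_valley_grounded True
      by (auto simp: valley_height_def split: option.splits)
  qed (use Cons in simp)
qed simp

lemma up_steps_le_1:
  "\<not> high_valley h u r w \<Longrightarrow> \<forall>e \<in> set (up_steps h u w). valley_height (snd e) \<le> 1"
proof (induction w arbitrary: h u r)
  case (Cons c w)
  show ?case
  proof (cases "c = 1")
    case True
    then have "\<not> high_valley (h + 1) True r w" using Cons.prems by simp
    then show ?thesis
      using Cons.IH next_valley_le_1 True by (auto simp: valley_height_def split: option.splits)
  qed (use Cons in simp)
qed simp

lemma up_steps_after_ground_valley:
  "(\<not> u \<and> h \<le> 0 \<longrightarrow> r) \<Longrightarrow> \<not> high_valley h u r w \<Longrightarrow>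
   next_valley h u w = Some v \<Longrightarrow> v \<le> 0 \<Longrightarrow>
   \<forall>e \<in> set (up_steps h u w). valley_height (snd e) \<le> 0"
proof (induction w arbitrary: h u r)
  case (Cons c w)
  show ?case
  proof (cases "c = 1")
    case True
    show ?thesis
    proof (cases u)
      case False
      then have r using Cons.prems True by simp
      then show ?thesis using up_steps_grounded Cons.prems(2) by blast
    next
      case True
      then show ?thesis
        using Cons.IH[of True "h + 1" r] Cons.prems \<open>c = 1\<close> by (simp add: valley_height_def)
    qed
  next
    case False
    then show ?thesis using Cons.IH[of False "h - 1" "r \<or> h - 1 \<le> 0"] Cons.prems by simp
  qed
qed simp

fun zeros_persist :: "(bool \<times> int option) list \<Rightarrow> bool" where
  "zeros_persist [] \<longleftrightarrow> True"
| "zeros_persist (e # L) \<longleftrightarrow>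
     (valley_height (snd e) \<le> 0 \<longrightarrow> (\<forall>e' \<in> set L. valley_height (snd e') \<le> 0)) \<and> zeros_persist L"

lemma up_steps_ground_valley_persists:
  assumes "\<not> high_valley h True r w" "valley_height (next_valley h True w) \<le> 0"
  shows "\<forall>e \<in> set (up_steps h True w). valley_height (snd e) \<le> 0"
proof (cases "next_valley h True w")
  case None
  then show ?thesis using up_steps_no_next_valley[OF None] by (simp add: valley_height_def)
next
  case (Some v)
  then show ?thesis
    using up_steps_after_ground_valley[OF _ assms(1) Some] assms(2) by (simp add: valley_height_def)
qed

lemma zeros_persist_up_steps:
  "(\<not> u \<and> h \<le> 0 \<longrightarrow> r) \<Longrightarrow> \<not> high_valley h u r w \<Longrightarrow> zeros_persist (up_steps h u w)"
proof (induction w arbitrary: h u r)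
  case (Cons c w)
  show ?case
  proof (cases "c = 1")
    case True
    then have "\<not> high_valley (h + 1) True r w" using Cons.prems by simp
    then show ?thesis
      using Cons.IH[of True "h + 1" r] up_steps_ground_valley_persists True by simp
  next
    case False
    then show ?thesis using Cons.IH[of False "h - 1" "r \<or> h - 1 \<le> 0"] Cons.prems by simp
  qed
qed simp

lemma code_no_high_valley:
  assumes "dyck d" "\<not> high_valley 0 False False d"
  shows "zeros_persist (up_steps 0 False d)"
    and "\<forall>e \<in> set (up_steps 0 False d). valley_height (snd e) \<le> 1"
proof -
  obtain w where d: "d = 1 # w" if "d \<noteq> []" using dyck_Cons assms(1) by (cases d) auto
  show "zeros_persist (up_steps 0 False d)"
  proof (cases "d = []")
    case False
    then have "\<not> high_valley 1 True False w" using assms(2) d by simp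
    then show ?thesis
      using zeros_persist_up_steps[of True 1 False w] up_steps_ground_valley_persists d False
      by simp
  qed simp
  show "\<forall>e \<in> set (up_steps 0 False d). valley_height (snd e) \<le> 1"
  proof (cases "d = []")
    case False
    then have "\<not> high_valley 1 True False w" using assms(2) d by simp
    then show ?thesis using up_steps_le_1 next_valley_le_1 d False
      by (auto simp: valley_height_def split: option.splits)
  qed simp
qed

lemma no_one_after_zero_up_letters:
  "zeros_persist L \<Longrightarrow> \<forall>e \<in> set L. valley_height (snd e) \<le> 1 \<Longrightarrow>
   no_one_after_zero (map up_letter L)"
proof (induction L)
  case (Cons e L)
  have "up_letter e = 0 \<longrightarrow> 1 \<notin> set (map up_letter L)"
  proof
    assume "up_letter e = 0"
    then have "valley_height (snd e) \<le> 0" unfolding up_letter_def by (auto split: if_splits)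
    then have "\<forall>e' \<in> set L. valley_height (snd e') \<le> 0" using Cons.prems by simp
    then show "1 \<notin> set (map up_letter L)" unfolding up_letter_def by auto
  qed
  then show ?case using Cons by simp
qed simp

lemma length_up_steps: "length (up_steps h u w) = count_list w 1"
  by (induction w arbitrary: h u) auto

lemma set_up_letters:
  "\<forall>e \<in> set L. valley_height (snd e) \<le> 1 \<Longrightarrow> set (map up_letter L) \<subseteq> {0,1,2}"
  unfolding up_letter_def by (auto simp: nat_le_iff)

section \<open>The path with a given code\<close>

text \<open>\<open>path_of h v cs\<close> continues an ascent at height \<open>h\<close> that will end in a valley of height
  \<open>v\<close>: a letter 2 extends the ascent, any other letter \<open>c\<close> descends to that valley and starts a
  new ascent, which will end in a valley of height \<open>c\<close>.\<close>

fun path_open :: "nat \<Rightarrow> nat \<Rightarrow> nat list \<Rightarrow> nat list" where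
  "path_open h v [] = []"
| "path_open h v (c # cs) =
     (if c = 2 then 1 # path_open (h + 1) v cs
      else replicate (h - v) 0 @ 1 # path_open (v + 1) c cs)"

fun path_state :: "nat \<Rightarrow> nat \<Rightarrow> nat list \<Rightarrow> nat \<times> nat" where
  "path_state h v [] = (h, v)"
| "path_state h v (c # cs) = (if c = 2 then path_state (h + 1) v cs else path_state (v + 1) c cs)"

definition path_of :: "nat \<Rightarrow> nat \<Rightarrow> nat list \<Rightarrow> nat list" where
  "path_of h v cs = path_open h v cs @ replicate (fst (path_state h v cs)) 0"

lemma path_of_Nil [simp]: "path_of h v [] = replicate h 0"
  by (simp add: path_of_def)

lemma path_of_Cons_2 [simp]: "path_of h v (2 # cs) = 1 # path_of (h + 1) v cs"
  by (simp add: path_of_def)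

lemma path_of_Cons:
  "c \<noteq> 2 \<Longrightarrow> path_of h v (c # cs) = replicate (h - v) 0 @ 1 # path_of (v + 1) c cs"
  by (simp add: path_of_def)

lemma path_open_append:
  "path_open h v (a @ b) =
     path_open h v a @ path_open (fst (path_state h v a)) (snd (path_state h v a)) b"
  by (induction a arbitrary: h v) auto

lemma path_state_append:
  "path_state h v (a @ b) = path_state (fst (path_state h v a)) (snd (path_state h v a)) b"
  by (induction a arbitrary: h v) auto

lemma path_of_append:
  "path_of h v (a @ b) =
     path_open h v a @ path_of (fst (path_state h v a)) (snd (path_state h v a)) b"
  unfolding path_of_def by (simp add: path_open_append path_state_append)

lemma path_open_replicate_2:
  "path_open h v (replicate j 2 @ cs) = replicate j 1 @ path_open (h + j) v cs"
  by (induction j arbitrary: h) auto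

lemma path_state_replicate_2: "path_state h v (replicate j 2 @ cs) = path_state (h + j) v cs"
  by (induction j arbitrary: h) auto

lemma path_of_replicate_2: "path_of h v (replicate j 2 @ cs) = replicate j 1 @ path_of (h + j) v cs"
  unfolding path_of_def by (simp add: path_open_replicate_2 path_state_replicate_2)

lemma path_open_snoc_1: "cs \<noteq> [] \<Longrightarrow> \<exists>p. path_open h v cs = p @ [1]"
proof (induction cs arbitrary: h v)
  case (Cons c cs)
  show ?case
  proof (cases "cs = []")
    case False
    then have "\<exists>p. path_open (h + 1) v cs = p @ [1]" "\<exists>p. path_open (v + 1) c cs = p @ [1]"
      using Cons.IH by blast+
    then show ?thesis by (cases "c = 2") auto
  qed auto
qed simp

lemma path_of_props:
  assumes "v \<le> h" "set cs \<subseteq> {0,1,2}"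
  shows "set (path_of h v cs) \<subseteq> {0,1} \<and> int h + level (path_of h v cs) = 0 \<and>
         stays_above (int h) (path_of h v cs) 0 \<and> count_list (path_of h v cs) 1 = length cs"
  using assms
proof (induction cs arbitrary: h v)
  case (Cons c cs)
  show ?case
  proof (cases "c = 2")
    case True
    then show ?thesis
      using Cons.IH[of v "h + 1"] Cons.prems by (simp add: rise_def algebra_simps)
  next
    case False
    then have "c \<le> v + 1" using Cons.prems by auto
    moreover have "int (h - v) = int h - int v" using Cons.prems by simp
    ultimately show ?thesis using Cons.IH[of c "v + 1"] Cons.prems False
      by (auto simp: path_of_Cons stays_above_append stays_above_replicate_0 rise_def algebra_simps)
  qed
qed (auto simp: stays_above_replicate_0 set_replicate_conv_if)

lemma dyck_path_of: "set cs \<subseteq> {0,1,2} \<Longrightarrow> dyck (path_of 0 0 cs)"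
  using path_of_props[of 0 0 cs] unfolding dyck_iff_level by simp

lemma binary_word_cases:
  assumes "set w \<subseteq> {0,1}"
  obtains (Nil) "w = []"
  | (Up) w' where "w = 1 # w'"
  | (Valley) k w' where "0 < k" "w = replicate k 0 @ 1 # w'"
  | (Down) k where "0 < k" "w = replicate k 0"
proof -
  obtain k rest where w: "w = replicate k 0 @ rest" "rest = [] \<or> hd rest \<noteq> 0"
    by (rule split_replicate_prefix)
  show thesis
  proof (cases rest)
    case Nil
    then show thesis using w that(1) that(4)[of k] by (cases "k = 0") auto
  next
    case (Cons c w')
    then have "c = 1" using w assms by auto
    then show thesis using w Cons that(2)[of w'] that(3)[of k w'] by (cases "k = 0") auto
  qed
qed

lemma path_of_up_letters:
  assumes "set w \<subseteq> {0,1}" "stays_above h w 0" "h + level w = 0"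
    and "\<forall>e \<in> set (up_steps h True w). valley_height (snd e) \<le> 1"
    and "valley_height (next_valley h True w) \<le> 1"
  shows "path_of (nat h) (nat (valley_height (next_valley h True w)))
           (map up_letter (up_steps h True w)) = w"
  using assms
proof (induction "length w" arbitrary: w h rule: less_induct)
  case less
  have h0: "0 \<le> h" using less.prems(2) stays_above_start by blast
  from less.prems(1) show ?case
  proof (cases rule: binary_word_cases)
    case Nil
    then show ?thesis using less.prems by simp
  next
    case (Up w')
    have "path_of (nat (h + 1)) (nat (valley_height (next_valley (h + 1) True w')))
        (map up_letter (up_steps (h + 1) True w')) = w'"
      using less.hyps[of w' "h + 1"] less.prems Up by (auto simp: rise_def algebra_simps)
    moreover have "nat (h + 1) = nat h + 1" using h0 by simp
    ultimately show ?thesis using Up by (simp add: up_letter_def)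
  next
    case (Valley k w')
    define g where "g = h - int k"
    have steps:
      "up_steps h True w = (False, next_valley (g + 1) True w') # up_steps (g + 1) True w'"
      using up_steps_replicate_0[OF Valley(1)] Valley(2) unfolding g_def by simp
    have "stays_above g (1 # w') 0"
      using less.prems(2) Valley(2) unfolding g_def
      by (simp add: stays_above_append stays_above_replicate_0)
    then have g: "0 \<le> g" "stays_above (g + 1) w' 0" by (auto simp: rise_def dest: stays_above_start)
    define c where "c = nat (valley_height (next_valley (g + 1) True w'))"
    have "c \<le> 1" using less.prems(4) steps unfolding c_def by auto
    have IH: "path_of (nat (g + 1)) c (map up_letter (up_steps (g + 1) True w')) = w'"
      unfolding c_def using Valley(2) less.prems(1,3,4) steps g(2)
      by (intro less.hyps) (auto simp: rise_def algebra_simps g_def)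
    have letters: "map up_letter (up_steps h True w) = c # map up_letter (up_steps (g + 1) True w')"
      using steps unfolding c_def by (simp add: up_letter_def)
    have "nat (valley_height (next_valley h True w)) = nat g"
      using next_valley_replicate_0[OF Valley(1)] Valley(2) unfolding g_def
      by (simp add: valley_height_def)
    moreover have "nat h - nat g = k" "nat g + 1 = nat (g + 1)" using g(1) unfolding g_def by auto
    ultimately show ?thesis
      unfolding letters using path_of_Cons[of c] \<open>c \<le> 1\<close> IH Valley(2) by simp
  next
    case (Down k)
    then have "up_steps h True w = []"
      using up_steps_replicate_0[OF Down(1), of h True "[]"] by simp
    moreover have "nat h = k" using less.prems(3) Down h0 by simp
    ultimately show ?thesis using Down by simp
  qed
qed

lemma path_of_code:
  assumes "dyck d" "\<forall>e \<in> set (up_steps 0 False d). valley_height (snd e) \<le> 1"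
  shows "path_of 0 0 (code d) = d"
proof (cases d)
  case (Cons c0 w)
  then have d: "d = 1 # w" using assms(1) dyck_Cons by simp
  have steps: "up_steps 0 False d = (False, next_valley 1 True w) # up_steps 1 True w"
    using d by simp
  define c where "c = nat (valley_height (next_valley 1 True w))"
  have "c \<le> 1" using assms(2) steps unfolding c_def by auto
  have "set w \<subseteq> {0,1}" "stays_above 1 w 0" "1 + level w = 0"
    using assms(1) d unfolding dyck_iff_level by (auto simp: rise_def)
  then have "path_of (nat 1) c (map up_letter (up_steps 1 True w)) = w"
    unfolding c_def by (rule path_of_up_letters) (use assms(2) steps in auto)
  moreover have "code d = c # map up_letter (up_steps 1 True w)"
    unfolding code_def steps c_def by (simp add: up_letter_def)
  ultimately show ?thesis using path_of_Cons[of c 0 0] \<open>c \<le> 1\<close> d by simp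
qed (simp add: code_def)

definition tr_path :: "nat list \<Rightarrow> nat list" where
  "tr_path u = path_of 0 0 (pad u)"

section \<open>The map rho on paths of triwords\<close>

definition rho_read :: "nat list \<Rightarrow> nat \<Rightarrow> nat \<times> nat list \<Rightarrow> nat \<times> nat list" where
  "rho_read pre c s =
     (let (N, u) = s in
      if 2 \<le> length pre \<and> last pre = 1 \<and> c = 1 then (N + 1, u)
      else if last pre = 0 \<and> c = 1 then (0, u @ [height pre] @ replicate N 2)
      else (N, u))"

fun rho_run :: "nat list \<Rightarrow> nat list \<Rightarrow> nat \<times> nat list \<Rightarrow> nat \<times> nat list" where
  "rho_run pre [] s = s"
| "rho_run pre (c # w) s = rho_run (pre @ [c]) w (rho_read pre c s)"

lemma fold_rho_step:
  "pre \<noteq> [] \<Longrightarrow>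
   fold (rho_step (pre @ w)) [length pre..<length pre + length w] s = rho_run pre w s"
proof (induction w arbitrary: pre s)
  case (Cons c w)
  have "[length pre..<length pre + length (c # w)] =
      length pre # [length (pre @ [c])..<length (pre @ [c]) + length w]"
    using upt_conv_Cons[of "length pre" "length pre + length (c # w)"] by simp
  moreover have "rho_step (pre @ c # w) (length pre) s = rho_read pre c s"
  proof -
    have before: "(pre @ c # w) ! (length pre - 1) = last pre"
      using Cons.prems by (simp add: nth_append last_conv_nth)
    have at: "(pre @ c # w) ! length pre = c" and prefix: "take (length pre) (pre @ c # w) = pre"
      by simp_all
    show ?thesis unfolding rho_step_def rho_read_def before at prefix by simp
  qed
  ultimately have "fold (rho_step (pre @ c # w)) [length pre..<length pre + length (c # w)] s =
      fold (rho_step ((pre @ [c]) @ w)) [length (pre @ [c])..<length (pre @ [c]) + length w]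
        (rho_read pre c s)"
    by simp
  also have "\<dots> = rho_run (pre @ [c]) w (rho_read pre c s)" by (rule Cons.IH) simp
  finally show ?case by simp
qed simp

lemma rho_eq_rho_run: "d \<noteq> [] \<Longrightarrow> rho d = snd (rho_run [hd d] (tl d) (0, []))"
  using fold_rho_step[of "[hd d]" "tl d" "(0, [])"] unfolding rho_def by simp

lemma rho_run_append: "rho_run pre (a @ b) s = rho_run (pre @ a) b (rho_run pre a s)"
  by (induction a arbitrary: pre s) auto

lemma rho_run_replicate_0: "rho_run pre (replicate k 0) s = s"
  by (induction k arbitrary: pre s) (auto simp: rho_read_def split: prod.splits)

text \<open>The word that \<open>rho\<close> appends while reading \<open>path_of h v cs\<close>, when \<open>N\<close> double rises are
  still to be recorded after the valley of height \<open>v\<close>.\<close>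

fun rho_word :: "nat \<Rightarrow> nat \<Rightarrow> nat list \<Rightarrow> nat list" where
  "rho_word v N [] = []"
| "rho_word v N (c # cs) =
     (if c = 2 then rho_word v (N + 1) cs else (v # replicate N 2) @ rho_word c 0 cs)"

lemma rho_word_snoc_0: "rho_word v N (cs @ [0]) = v # replicate N 2 @ cs"
proof (induction cs arbitrary: v N)
  case (Cons c cs)
  then show ?case
    using Cons.IH[of v "N + 1"] Cons.IH[of c 0] by (simp add: replicate_app_Cons_same)
qed simp

lemma count_list_replicate: "count_list (replicate k x) y = (if x = y then k else 0)"
  by (induction k) auto

lemma height_append_replicate_0: "height (pre @ replicate k 0) = height pre - k"
  unfolding height_def by (simp add: count_list_replicate)

lemma height_snoc_1:
  "count_list pre 0 \<le> count_list pre (Suc 0) \<Longrightarrow> height (pre @ [Suc 0]) = Suc (height pre)"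
  unfolding height_def by simp

lemma rho_run_path_of:
  assumes "2 \<le> length pre" "last pre = 1" "height pre = h" "count_list pre 0 \<le> count_list pre 1"
    and "v < h" "set cs \<subseteq> {0,1,2}" "v = 0 \<longrightarrow> 1 \<notin> set cs" "no_one_after_zero cs"
  shows "snd (rho_run pre (path_of h v cs) (N, out)) = out @ rho_word v N cs"
  using assms
proof (induction cs arbitrary: pre h v N out)
  case Nil
  then show ?case using rho_run_replicate_0 by simp
next
  case (Cons c cs)
  show ?case
  proof (cases "c = 2")
    case True
    have "rho_read pre 1 (N, out) = (N + 1, out)" using Cons.prems unfolding rho_read_def by simp
    moreover have "snd (rho_run (pre @ [1]) (path_of (h + 1) v cs) (N + 1, out)) =
        out @ rho_word v (N + 1) cs"
      using Cons.prems by (intro Cons.IH) (auto simp: height_snoc_1)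
    ultimately show ?thesis using True by simp
  next
    case False
    define pre' where "pre' = pre @ replicate (h - v) 0"
    have "last pre' = 0" "height pre' = v"
      unfolding pre'_def using height_append_replicate_0 Cons.prems by auto
    moreover have count: "count_list pre' 0 \<le> count_list pre' (Suc 0)"
      using Cons.prems unfolding pre'_def height_def by (simp add: count_list_replicate)
    ultimately have read: "rho_read pre' 1 (N, out) = (0, out @ [v] @ replicate N 2)"
      unfolding rho_read_def by simp
    have "c < v + 1" using Cons.prems False by auto
    have "snd (rho_run (pre' @ [1]) (path_of (v + 1) c cs) (0, out @ [v] @ replicate N 2)) =
        (out @ [v] @ replicate N 2) @ rho_word c 0 cs"
    proof (rule Cons.IH)
      show "2 \<le> length (pre' @ [1])" using Cons.prems unfolding pre'_def by simp
      show "height (pre' @ [1]) = v + 1" using height_snoc_1[OF count] \<open>height pre' = v\<close> by simp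
      show "count_list (pre' @ [1]) 0 \<le> count_list (pre' @ [1]) 1" using count by simp
    qed (use Cons.prems \<open>c < v + 1\<close> in \<open>auto simp: no_one_after_zero_append\<close>)
    moreover have "rho_run pre (path_of h v (c # cs)) (N, out) =
        rho_run (pre' @ [1]) (path_of (v + 1) c cs) (rho_read pre' 1 (N, out))"
      unfolding path_of_Cons[OF False] pre'_def by (simp add: rho_run_append rho_run_replicate_0)
    ultimately show ?thesis using read False by simp
  qed
qed

lemma rho_tr_path:
  assumes "u \<in> Tr n" "1 \<le> n"
  shows "rho (tr_path u) = u"
proof -
  have U: "length u = n" "set u \<subseteq> {0,1,2}" "u ! 0 \<noteq> 2" "no_one_after_zero u"
    using assms(1) Tr_iff by auto
  obtain t r where u: "u = t # r" using U(1) assms(2) by (cases u) auto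
  then have t: "t < 2" using U by auto
  have "tr_path u = 1 # path_of 1 t (2 # r @ [0])"
    unfolding tr_path_def pad_def u using path_of_Cons[of t 0 0] t by simp
  also have "\<dots> = [1, 1] @ path_of 2 t (r @ [0])"
    using path_of_Cons_2[of 1 t "r @ [0]"] by (simp add: numeral_2_eq_2)
  finally have "rho (tr_path u) = snd (rho_run [1, 1] (path_of 2 t (r @ [0])) (0, []))"
    using rho_eq_rho_run by (simp add: rho_read_def)
  also have "\<dots> = [] @ rho_word t 0 (r @ [0])"
    by (rule rho_run_path_of) (use U u t in \<open>auto simp: height_def no_one_after_zero_append\<close>)
  also have "\<dots> = u" using rho_word_snoc_0 u by simp
  finally show ?thesis .
qed

section \<open>Raising a letter of a triword is a dexter cover\<close>

lemma path_of_ground_suffix: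
  assumes "rest = [] \<or> hd rest \<noteq> 2"
  obtains S where "S = [] \<or> hd S = 1" "\<And>k. path_of k 0 rest = replicate k 0 @ S"
proof (cases rest)
  case (Cons c R)
  then have "c \<noteq> 2" using assms by simp
  then show thesis using that[of "1 # path_of 1 c R"] by (simp add: Cons path_of_Cons)
qed (use that in simp)

text \<open>Raising a letter 0 to 1 moves the pyramid of the next ascent one down step to the left.\<close>

lemma dexter_cover_path_of_0_1:
  assumes L: "set (A @ [0] @ replicate j 2 @ [0] @ C) \<subseteq> {0,1,2}"
  shows "dexter_cover (path_of 0 0 (A @ [0] @ replicate j 2 @ [0] @ C))
           (path_of 0 0 (A @ [1] @ replicate j 2 @ [0] @ C))"
proof -
  obtain h v where hv: "path_state 0 0 A = (h, v)" by fastforce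
  obtain j' rest where C: "C = replicate j' 2 @ rest" "rest = [] \<or> hd rest \<noteq> 2"
    by (rule split_replicate_prefix)
  obtain S where S: "S = [] \<or> hd S = 1" "\<And>k. path_of k 0 rest = replicate k 0 @ S"
    using path_of_ground_suffix[OF C(2)] by blast
  have tail: "path_of k 0 C = replicate j' 1 @ replicate (k + j') 0 @ S" for k
    unfolding C(1) path_of_replicate_2 S(2) by simp
  have e1: "path_of 0 0 (A @ [0] @ replicate j 2 @ [0] @ C) =
      path_open 0 0 A @ replicate (h - v) 0 @ 1 # replicate j 1 @ replicate (v + 1 + j) 0 @
      1 # replicate j' 1 @ replicate (1 + j') 0 @ S"
  proof -
    have "path_of 0 0 (A @ [0] @ replicate j 2 @ [0] @ C) =
        path_open 0 0 A @ path_of h v (0 # replicate j 2 @ 0 # C)"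
      using hv path_of_append[of 0 0 A "0 # replicate j 2 @ 0 # C"] by simp
    also have "path_of h v (0 # replicate j 2 @ 0 # C) =
        replicate (h - v) 0 @ 1 # path_of (v + 1) 0 (replicate j 2 @ 0 # C)"
      by (simp add: path_of_Cons)
    also have "path_of (v + 1) 0 (replicate j 2 @ 0 # C) =
        replicate j 1 @ path_of (v + 1 + j) 0 (0 # C)"
      by (rule path_of_replicate_2)
    also have "path_of (v + 1 + j) 0 (0 # C) = replicate (v + 1 + j) 0 @ 1 # path_of 1 0 C"
      by (simp add: path_of_Cons)
    finally show ?thesis using tail[of 1] by simp
  qed
  have e2: "path_of 0 0 (A @ [1] @ replicate j 2 @ [0] @ C) =
      path_open 0 0 A @ replicate (h - v) 0 @ 1 # replicate j 1 @ replicate (v + j) 0 @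
      1 # replicate j' 1 @ replicate (2 + j') 0 @ S"
  proof -
    have "path_of 0 0 (A @ [1] @ replicate j 2 @ [0] @ C) =
        path_open 0 0 A @ path_of h v (1 # replicate j 2 @ 0 # C)"
      using hv path_of_append[of 0 0 A "1 # replicate j 2 @ 0 # C"] by simp
    also have "path_of h v (1 # replicate j 2 @ 0 # C) =
        replicate (h - v) 0 @ 1 # path_of (v + 1) 1 (replicate j 2 @ 0 # C)"
      by (simp add: path_of_Cons)
    also have "path_of (v + 1) 1 (replicate j 2 @ 0 # C) =
        replicate j 1 @ path_of (v + 1 + j) 1 (0 # C)"
      by (rule path_of_replicate_2)
    also have "path_of (v + 1 + j) 1 (0 # C) = replicate (v + j) 0 @ 1 # path_of 2 0 C"
      by (simp add: path_of_Cons numeral_2_eq_2)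
    finally show ?thesis using tail[of 2] by simp
  qed
  define p where "p = path_open 0 0 A @ replicate (h - v) 0 @ replicate j 1"
  define x where "x = replicate (Suc j') 1 @ replicate (Suc j') (0::nat)"
  have "path_of 0 0 (A @ [0] @ replicate j 2 @ [0] @ C) = p @ [1] @ replicate (v + j + 1) 0 @ x @ S"
    unfolding e1 p_def x_def by (simp add: replicate_append_same[symmetric])
  moreover have "path_of 0 0 (A @ [1] @ replicate j 2 @ [0] @ C) =
      p @ [1] @ replicate (v + j) 0 @ x @ replicate 1 0 @ S"
    unfolding e2 p_def x_def
    by (simp add: replicate_append_same[symmetric] replicate_add[symmetric])
  ultimately show ?thesis
    using dexter_coverI[of p "v + j" 1 x S] dyck_path_of[OF L] S(1) primitive_pyramid[of "Suc j'"]
    unfolding x_def by simp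
qed

text \<open>Raising a letter \<open>c\<close> to 2 moves the pyramid of its ascent to the left across the whole
  descent before it, merging it into the previous ascent.\<close>

lemma dexter_cover_path_of_2:
  assumes L: "set (A @ c # replicate j 2 @ c' # C) \<subseteq> {0,1,2}"
    and hc: "path_state 0 0 A = (h, c)" "c < h" and "c \<noteq> 2" "c' \<noteq> 2" "A \<noteq> []"
  shows "dexter_cover (path_of 0 0 (A @ c # replicate j 2 @ c' # C))
           (path_of 0 0 (A @ 2 # replicate j 2 @ c' # C))"
proof -
  obtain p where p: "path_open 0 0 A = p @ [1]" using path_open_snoc_1[OF \<open>A \<noteq> []\<close>] by blast
  define S where "S = 1 # path_of (c + 1) c' C"
  have e1: "path_of 0 0 (A @ c # replicate j 2 @ c' # C) =
      path_open 0 0 A @ replicate (h - c) 0 @ 1 # replicate j 1 @ replicate (Suc j) 0 @ S"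
  proof -
    have "path_of 0 0 (A @ c # replicate j 2 @ c' # C) =
        path_open 0 0 A @ path_of h c (c # replicate j 2 @ c' # C)"
      using hc by (simp add: path_of_append)
    also have "path_of h c (c # replicate j 2 @ c' # C) =
        replicate (h - c) 0 @ 1 # replicate j 1 @ path_of (c + 1 + j) c (c' # C)"
      using assms by (simp add: path_of_Cons path_of_replicate_2)
    also have "path_of (c + 1 + j) c (c' # C) = replicate (Suc j) 0 @ S"
      unfolding S_def using assms by (simp add: path_of_Cons)
    finally show ?thesis by simp
  qed
  have e2: "path_of 0 0 (A @ 2 # replicate j 2 @ c' # C) =
      path_open 0 0 A @ 1 # replicate j 1 @ replicate (Suc j) 0 @ replicate (h - c) 0 @ S"
  proof -
    have "path_of 0 0 (A @ 2 # replicate j 2 @ c' # C) =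
        path_open 0 0 A @ path_of h c (2 # replicate j 2 @ c' # C)"
      using hc by (simp add: path_of_append)
    also have "path_of h c (2 # replicate j 2 @ c' # C) =
        1 # replicate j 1 @ path_of (h + 1 + j) c (c' # C)"
      by (simp add: path_of_replicate_2)
    also have "path_of (h + 1 + j) c (c' # C) = replicate (h + 1 + j - c) 0 @ S"
      unfolding S_def using assms by (simp add: path_of_Cons)
    also have "h + 1 + j - c = Suc j + (h - c)" using hc by simp
    finally show ?thesis by (simp add: replicate_add)
  qed
  define x where "x = replicate (Suc j) 1 @ replicate (Suc j) (0::nat)"
  have "path_of 0 0 (A @ c # replicate j 2 @ c' # C) = p @ [1] @ replicate (h - c) 0 @ x @ S"
    unfolding e1 p x_def by (simp add: replicate_append_same[symmetric])
  moreover have "path_of 0 0 (A @ 2 # replicate j 2 @ c' # C) =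
      p @ [1] @ replicate 0 0 @ x @ replicate (h - c) 0 @ S"
    unfolding e2 p x_def by (simp add: replicate_append_same[symmetric])
  ultimately show ?thesis
    using dexter_coverI[of p 0 "h - c" x S] dyck_path_of[OF L] hc(2) primitive_pyramid[of "Suc j"]
    unfolding x_def S_def by simp
qed

lemma snd_path_state: "snd (path_state h v A) = last (v # filter (\<lambda>c. c \<noteq> 2) A)"
  by (induction A arbitrary: h v) auto

lemma path_state_valley_below:
  "v < h \<Longrightarrow> set A \<subseteq> {0,1,2} \<Longrightarrow> (v = 0 \<longrightarrow> 1 \<notin> set A) \<Longrightarrow> no_one_after_zero A \<Longrightarrow>
   snd (path_state h v A) < fst (path_state h v A)"
proof (induction A arbitrary: h v)
  case (Cons c A)
  show ?case
  proof (cases "c = 2")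
    case False
    then have "c < v + 1" using Cons.prems by auto
    then show ?thesis using Cons False by simp
  qed (use Cons in simp)
qed simp

lemma last_filter_non_2:
  assumes "set B \<subseteq> {0,1,2}" "no_one_after_zero B" "filter (\<lambda>c. c \<noteq> 2) B \<noteq> []"
  shows "last (filter (\<lambda>c. c \<noteq> 2) B) = (if 0 \<in> set B then 0 else 1)"
  using assms
proof (induction B rule: rev_induct)
  case (snoc b B)
  then show ?case by (cases "b = 2") (auto simp: no_one_after_zero_append)
qed simp

lemma set_pad: "u \<noteq> [] \<Longrightarrow> set (pad u) = insert 0 (insert 2 (set u))"
  by (cases u) (auto simp: pad_def)

lemma pad_split:
  obtains A Rt where "\<And>c. pad (B @ c # R) = A @ c # Rt" "0 \<in> set Rt"
    "set Rt \<subseteq> insert 0 (insert 2 (set R))" "B \<noteq> [] \<Longrightarrow> A = hd B # 2 # tl B"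
proof (cases B)
  case Nil
  show thesis by (rule that[of "[]" "2 # R @ [0]"]) (auto simp: pad_def Nil)
next
  case (Cons b B')
  show thesis by (rule that[of "b # 2 # B'" "R @ [0]"]) (auto simp: pad_def Cons)
qed

lemma dexter_cover_tr_path_0_1:
  assumes "B @ 0 # R \<in> Tr n"
  shows "dexter_cover (tr_path (B @ 0 # R)) (tr_path (B @ 1 # R))"
proof -
  obtain A Rt where pad: "\<And>c. pad (B @ c # R) = A @ c # Rt" "0 \<in> set Rt"
    "set Rt \<subseteq> insert 0 (insert 2 (set R))"
    using pad_split[of B R] by metis
  have u: "set (B @ 0 # R) \<subseteq> {0,1,2}" "1 \<notin> set R"
    using assms unfolding Tr_iff by (simp_all add: no_one_after_zero_append)
  then have Rt_set: "set Rt \<subseteq> {0,2}" using pad(3) by auto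
  obtain j rest where Rt: "Rt = replicate j 2 @ rest" "rest = [] \<or> hd rest \<noteq> 2"
    by (rule split_replicate_prefix)
  then have "rest \<noteq> []" using pad(2) by auto
  then obtain c C where "rest = c # C" by (cases rest) auto
  moreover have "c = 0" using Rt Rt_set \<open>rest = c # C\<close> by auto
  moreover have "set (A @ 0 # Rt) \<subseteq> {0,1,2}"
    using set_pad[of "B @ 0 # R"] pad(1)[of 0] u(1) by simp
  ultimately show ?thesis
    using dexter_cover_path_of_0_1[of A j C] pad(1) Rt(1) unfolding tr_path_def by simp
qed

lemma dexter_cover_tr_path_2:
  assumes u: "B @ a # R \<in> Tr n" and "B \<noteq> []" "a \<noteq> 2"
    and last: "last (filter (\<lambda>c. c \<noteq> 2) B) = a"
  shows "dexter_cover (tr_path (B @ a # R)) (tr_path (B @ 2 # R))"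
proof -
  obtain A Rt where pad: "\<And>c. pad (B @ c # R) = A @ c # Rt" "0 \<in> set Rt" "A = hd B # 2 # tl B"
    using pad_split[of B R] \<open>B \<noteq> []\<close> by metis
  obtain b B' where B: "B = b # B'" using \<open>B \<noteq> []\<close> by (cases B) auto
  have b: "b \<noteq> 2" "b < 2"
    and B': "set B' \<subseteq> {0,1,2}" "b = 0 \<longrightarrow> 1 \<notin> set B'" "no_one_after_zero B'"
    using u unfolding B Tr_iff by (auto simp: no_one_after_zero_append)
  then have state: "path_state 0 0 A = path_state 2 b B'"
    unfolding pad(3) B by (simp add: numeral_2_eq_2)
  have "snd (path_state 2 b B') = a" using last b unfolding B snd_path_state by simp
  moreover have "snd (path_state 2 b B') < fst (path_state 2 b B')"
    using path_state_valley_below b B' by blast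
  ultimately have hc: "path_state 0 0 A = (fst (path_state 2 b B'), a)"
    and below: "a < fst (path_state 2 b B')"
    using state by (metis prod.collapse)+
  obtain j rest where Rt: "Rt = replicate j 2 @ rest" "rest = [] \<or> hd rest \<noteq> 2"
    by (rule split_replicate_prefix)
  obtain c' C where rest: "rest = c' # C" "c' \<noteq> 2"
    using Rt pad(2) by (cases rest) auto
  have "set (A @ a # Rt) \<subseteq> {0,1,2}" using set_pad[of "B @ a # R"] pad(1) u by (auto simp: Tr_iff)
  then show ?thesis
    using dexter_cover_path_of_2[OF _ hc below \<open>a \<noteq> 2\<close> rest(2)] pad(1,3) Rt(1) rest(1)
    unfolding tr_path_def by simp
qed

lemma Tr_raise:
  assumes u: "B @ a # R \<in> Tr n" and v: "B @ b # R' \<in> Tr n" and R: "list_all2 (\<le>) R R'"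
    and c: "a < c" "c \<le> b" "0 \<in> set B \<longrightarrow> c \<noteq> 1"
  shows "B @ c # R \<in> Tr n" "list_all2 (\<le>) (B @ c # R) (B @ b # R')"
proof -
  show "B @ c # R \<in> Tr n"
    using u v c unfolding Tr_iff by (cases B) (auto simp: no_one_after_zero_append)
  show "list_all2 (\<le>) (B @ c # R) (B @ b # R')"
    using R c by (simp add: list_all2_appendI list_all2_refl)
qed

text \<open>Raise the first letter in which \<open>u\<close> differs from \<open>v\<close>: to 1 when no 0 precedes it, and
  to 2 otherwise.\<close>

lemma Tr_dexter_cover_step:
  assumes u: "u \<in> Tr n" and v: "v \<in> Tr n" and le: "list_all2 (\<le>) u v" and ne: "u \<noteq> v"
  obtains u' where "u' \<in> Tr n" "list_all2 (\<le>) u' v" "sum_list u < sum_list u'"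
    "dexter_cover (tr_path u) (tr_path u')"
proof -
  obtain B a R b R'
    where uv: "u = B @ a # R" "v = B @ b # R'" "a \<noteq> b" "a \<le> b" "list_all2 (\<le>) R R'"
    using list_all2_first_difference[OF le ne] by blast
  have U: "set (B @ a # R) \<subseteq> {0,1,2}" "hd (B @ a # R) \<noteq> 2" "no_one_after_zero (B @ a # R)"
    using u uv(1) unfolding Tr_iff by (auto simp: hd_conv_nth)
  have V: "set (B @ b # R') \<subseteq> {0,1,2}" "hd (B @ b # R') \<noteq> 2" "no_one_after_zero (B @ b # R')"
    using v uv(2) unfolding Tr_iff by (auto simp: hd_conv_nth)
  have "a = 0 \<and> 0 \<notin> set B \<or> B \<noteq> [] \<and> b = 2 \<and> a \<noteq> 2 \<and> last (filter (\<lambda>c. c \<noteq> 2) B) = a"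
  proof (cases "a = 0 \<and> 0 \<notin> set B")
    case False
    have "b = 2" using False uv(3,4) U V by (auto simp: no_one_after_zero_append)
    moreover have "B \<noteq> []" using V \<open>b = 2\<close> by auto
    moreover have "filter (\<lambda>c. c \<noteq> 2) B \<noteq> []" using \<open>B \<noteq> []\<close> V(2) by (cases B) auto
    ultimately show ?thesis
      using False uv(3,4) U last_filter_non_2[of B] by (auto simp: no_one_after_zero_append)
  qed simp
  then show thesis
  proof
    assume a: "a = 0 \<and> 0 \<notin> set B"
    show thesis
    proof (rule that)
      show "B @ 1 # R \<in> Tr n" "list_all2 (\<le>) (B @ 1 # R) v"
        using Tr_raise[of B a R n b R' 1] u v uv a by auto
      show "sum_list u < sum_list (B @ 1 # R)" using uv a by simp
      show "dexter_cover (tr_path u) (tr_path (B @ 1 # R))"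
        using dexter_cover_tr_path_0_1 u uv a by simp
    qed
  next
    assume a: "B \<noteq> [] \<and> b = 2 \<and> a \<noteq> 2 \<and> last (filter (\<lambda>c. c \<noteq> 2) B) = a"
    show thesis
    proof (rule that)
      show "B @ 2 # R \<in> Tr n" "list_all2 (\<le>) (B @ 2 # R) v"
        using Tr_raise[of B a R n b R' 2] u v uv a by auto
      show "sum_list u < sum_list (B @ 2 # R)" using uv a by simp
      show "dexter_cover (tr_path u) (tr_path (B @ 2 # R))"
        using dexter_cover_tr_path_2 u uv a by simp
    qed
  qed
qed

lemma dexter_le_tr_path:
  assumes "u \<in> Tr n" "v \<in> Tr n" "list_all2 (\<le>) u v"
  shows "dexter_le (tr_path u) (tr_path v)"
  using assms
proof (induction "sum_list v - sum_list u" arbitrary: u rule: less_induct)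
  case less
  show ?case
  proof (cases "u = v")
    case True
    then show ?thesis unfolding dexter_le_def by simp
  next
    case False
    then obtain u' where u': "u' \<in> Tr n" "list_all2 (\<le>) u' v" "sum_list u < sum_list u'"
      "dexter_cover (tr_path u) (tr_path u')"
      using Tr_dexter_cover_step[OF less.prems] by blast
    have "sum_list v - sum_list u' < sum_list v - sum_list u"
      using sum_list_mono_list_all2[OF u'(2)] u'(3) by simp
    then have "dexter_le (tr_path u') (tr_path v)" using less.hyps u'(1,2) less.prems(2) by blast
    then show ?thesis
      using u'(4) unfolding dexter_le_def by (meson converse_rtranclp_into_rtranclp)
  qed
qed

section \<open>Paths of \<open>F(n)\<close> are the paths of triwords\<close>

lemma F_no_high_valley:
  assumes "d \<in> F n" "1 \<le> n"
  shows "\<not> high_valley 0 False False d"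
  using assms dexter_le_high_valley F_top_no_high_valley unfolding F_def by blast

lemma up_steps_F_bot: "\<exists>a v L. up_steps 0 False (F_bot n) = a # (True, v) # L"
  unfolding F_bot_def by auto

lemma up_steps_F_top: "1 \<le> n \<Longrightarrow> \<exists>L. up_steps 0 False (F_top n) = L @ [(False, None)]"
proof -
  assume n: "1 \<le> n"
  define A where "A = [1] @ replicate n 1 @ replicate n (0::nat)"
  have "\<not> last_up False A" unfolding A_def using n by (simp add: last_up_eq_last)
  then show ?thesis
    using up_steps_append[of 0 False A "[1,0,0]"] unfolding F_top_def A_def by simp
qed

lemma pad_inverse:
  assumes "length t = n + 2" "1 \<le> n" "t ! 0 \<noteq> 2" "t ! 1 = 2" "t ! (n + 1) = 0"
    and "set t \<subseteq> {0,1,2}" "no_one_after_zero t"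
  obtains u where "u \<in> Tr n" "pad u = t"
proof -
  obtain t0 t1 r where t: "t = t0 # t1 # r" using assms(1) by (cases t; cases "tl t") auto
  have "length r = n" "r \<noteq> []" using assms(1,2) t by auto
  moreover have "last r = 0" using assms(5) t \<open>length r = n\<close> \<open>r \<noteq> []\<close>
    by (simp add: last_conv_nth nth_Cons split: nat.splits)
  ultimately obtain r' where r: "r = r' @ [0]" "length r' + 1 = n"
    by (metis append_butlast_last_id length_append_singleton Suc_eq_plus1 length_butlast)
  have "pad (t0 # r') = t" using assms(4) t r by (simp add: pad_def)
  moreover have "t0 # r' \<in> Tr n"
    using assms(3,6,7) t r unfolding Tr_iff by (auto simp: no_one_after_zero_append)
  ultimately show thesis using that by blast
qed

text \<open>Being above \<open>F_bot n\<close> forces the double rise at the start of the code, being below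
  \<open>F_top n\<close> forces its final 0 and rules out high valleys.\<close>

lemma code_F:
  assumes d: "d \<in> F n" and n: "1 \<le> n"
  obtains u where "u \<in> Tr n" "pad u = code d"
proof (rule pad_inverse)
  define S where "S = up_steps 0 False d"
  have D: "dyck d" "length d = 2 * (n + 2)" "dexter_le (F_bot n) d" "dexter_le d (F_top n)"
    using d unfolding F_def by auto
  have good: "zeros_persist S" "\<forall>e \<in> set S. valley_height (snd e) \<le> 1"
    using code_no_high_valley[OF D(1) F_no_high_valley[OF d n]] unfolding S_def by auto
  have code: "code d = map up_letter S" unfolding code_def S_def ..
  have len: "length S = n + 2"
    using dyck_length[OF D(1)] D(2) unfolding S_def length_up_steps by simp
  show "length (code d) = n + 2" using len code by simp
  show "set (code d) \<subseteq> {0,1,2}" "no_one_after_zero (code d)"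
    using good code set_up_letters no_one_after_zero_up_letters by auto
  obtain w where "d = 1 # w" using D(1,2) dyck_Cons by (cases d) auto
  then have "\<not> fst (S ! 0)" unfolding S_def by simp
  moreover have "valley_height (snd (S ! 0)) \<le> 1" using good len by simp
  ultimately show "code d ! 0 \<noteq> 2" using len code by (auto simp: up_letter_def)
  obtain a v L where "up_steps 0 False (F_bot n) = a # (True, v) # L" using up_steps_F_bot by blast
  then have "fst (S ! 1)"
    using dexter_le_up_steps[OF D(3)] unfolding S_def by (auto simp: list_all2_Cons1 up_le_def)
  then show "code d ! 1 = 2" using len code by (simp add: up_letter_def)
  obtain L where top: "up_steps 0 False (F_top n) = L @ [(False, None)]"
    using up_steps_F_top[OF n] by blast
  have S_top: "list_all2 up_le S (L @ [(False, None)])"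
    using dexter_le_up_steps[OF D(4)] top unfolding S_def by simp
  then have "length L = n + 1" using len list_all2_lengthD by fastforce
  then have "up_le (S ! (n + 1)) (False, None)"
    using S_top len list_all2_nthD[OF S_top, of "n + 1"] by (simp add: nth_append)
  then show "code d ! (n + 1) = 0"
    using len code by (auto simp: up_le_def up_letter_def valley_height_def)
qed (use n in simp_all)

lemma F_tr_path:
  assumes d: "d \<in> F n" and n: "1 \<le> n"
  obtains u where "u \<in> Tr n" "d = tr_path u" "pad u = code d"
proof -
  obtain u where u: "u \<in> Tr n" "pad u = code d" using code_F[OF d n] .
  have "dyck d" using d unfolding F_def by simp
  then have "d = path_of 0 0 (code d)"
    using code_no_high_valley F_no_high_valley[OF d n] path_of_code by simp
  then show thesis using that u unfolding tr_path_def by simp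
qed

lemma path_of_1_replicate_0: "path_of 1 0 (replicate k 0) = concat (replicate k [0,1]) @ [0]"
proof (induction k)
  case (Suc k)
  then show ?case using path_of_Cons[of 0 1 0 "replicate k 0"] by simp
qed simp

lemma tr_path_bot: "1 \<le> n \<Longrightarrow> tr_path (replicate n 0) = F_bot n"
proof -
  assume "1 \<le> n"
  then obtain m where n: "n = Suc m" by (cases n) auto
  have "pad (replicate n 0) = 0 # 2 # 0 # replicate m 0"
    unfolding pad_def n by (simp add: replicate_append_same)
  then have "tr_path (replicate n 0) = [1, 1, 0, 0] @ 1 # path_of 1 0 (replicate m 0)"
    unfolding tr_path_def by (simp add: path_of_Cons)
  also have "1 # path_of 1 0 (replicate m 0) = concat (replicate (Suc m) [1, 0])"
    unfolding path_of_1_replicate_0 by (induction m) auto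
  finally show ?thesis unfolding F_bot_def n .
qed

lemma tr_path_top: "1 \<le> n \<Longrightarrow> tr_path (1 # replicate (n - 1) 2) = F_top n"
proof -
  assume "1 \<le> n"
  then have "pad (1 # replicate (n - 1) 2) = 1 # replicate n 2 @ [0]"
    unfolding pad_def by (cases n) auto
  then have "tr_path (1 # replicate (n - 1) 2) = 1 # replicate n 1 @ path_of (1 + n) 1 [0]"
    unfolding tr_path_def by (simp add: path_of_Cons path_of_replicate_2)
  also have "path_of (1 + n) 1 [0] = replicate n 0 @ [1, 0, 0]"
    by (simp add: path_of_Cons numeral_2_eq_2)
  finally show ?thesis unfolding F_top_def by simp
qed

lemma tr_path_in_F:
  assumes u: "u \<in> Tr n" and n: "1 \<le> n"
  shows "tr_path u \<in> F n"
proof -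
  have U: "length u = n" "set u \<subseteq> {0,1,2}" "u ! 0 \<noteq> 2" using u unfolding Tr_iff by auto
  have "u \<noteq> []" using U(1) n by auto
  then have pad_set: "set (pad u) \<subseteq> {0,1,2}" using U(2) set_pad[of u] by auto
  have D: "dyck (tr_path u)" unfolding tr_path_def using dyck_path_of[OF pad_set] .
  have "count_list (tr_path u) 1 = n + 2"
    unfolding tr_path_def using path_of_props[OF _ pad_set] U(1) n
    by (cases u) (auto simp: pad_def)
  then have len: "length (tr_path u) = 2 * (n + 2)" using dyck_length[OF D] by simp
  have bot: "replicate n 0 \<in> Tr n" and top: "1 # replicate (n - 1) 2 \<in> Tr n"
    unfolding Tr_iff using n by (cases n; auto simp: no_one_after_zero_iff_nth)+
  have "list_all2 (\<le>) (replicate n 0) u" using U(1) by (simp add: list_all2_conv_all_nth)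
  moreover have "list_all2 (\<le>) u (1 # replicate (n - 1) 2)"
  proof -
    obtain a r where u: "u = a # r" using \<open>u \<noteq> []\<close> by (cases u) auto
    have "\<forall>x \<in> set r. x \<le> 2" using U(2) u by auto
    then have "list_all2 (\<le>) r (replicate (length r) 2)" by (induction r) auto
    moreover have "a \<le> 1" using U(2,3) u by auto
    moreover have "n - 1 = length r" using U(1) u by simp
    ultimately show ?thesis using u by simp
  qed
  ultimately show ?thesis
    unfolding F_def using D len dexter_le_tr_path[OF bot u] dexter_le_tr_path[OF u top]
      tr_path_bot[OF n] tr_path_top[OF n] by simp
qed

lemma F_eq_tr_path_image: "1 \<le> n \<Longrightarrow> F n = tr_path ` Tr n"
  using F_tr_path tr_path_in_F by blast

lemma code_tr_path:
  assumes "u \<in> Tr n" "1 \<le> n"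
  shows "code (tr_path u) = pad u"
proof -
  obtain u' where u': "u' \<in> Tr n" "tr_path u = tr_path u'" "pad u' = code (tr_path u)"
    using F_tr_path[OF tr_path_in_F[OF assms] assms(2)] by metis
  then have "u = u'" using rho_tr_path assms by metis
  then show ?thesis using u'(3) by simp
qed

lemma dexter_le_code:
  assumes "dexter_le d d'" "dyck d" "\<not> high_valley 0 False False d"
  shows "list_all2 (\<le>) (code d) (code d')"
proof -
  have "up_letter e \<le> up_letter e'" if "up_le e e'" "valley_height (snd e) \<le> 1" for e e'
    using that unfolding up_le_def up_letter_def by auto
  moreover have "\<forall>e \<in> set (up_steps 0 False d). valley_height (snd e) \<le> 1"
    using code_no_high_valley assms(2,3) by blast
  ultimately show ?thesis
    using dexter_le_up_steps[OF assms(1)] unfolding code_def list.rel_map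
    by (auto simp: list_all2_conv_all_nth)
qed

lemma pad_le_imp_le:
  assumes "list_all2 (\<le>) (pad u) (pad u')" "u \<noteq> []" "u' \<noteq> []"
  shows "list_all2 (\<le>) u u'"
proof -
  obtain a r a' r' where u: "u = a # r" "u' = a' # r'" using assms(2,3) by (meson list.exhaust)
  then have "a \<le> a'" "list_all2 (\<le>) (r @ [0]) (r' @ [0])"
    using assms(1) by (simp_all add: pad_def)
  moreover have "length r = length r'" using list_all2_lengthD[OF calculation(2)] by simp
  ultimately show ?thesis using u by (simp add: list_all2_append)
qed

lemma tr_le_iff_list_all2: "tr_le u v \<longleftrightarrow> list_all2 (\<le>) u v"
  unfolding tr_le_def list_all2_conv_all_nth ..

lemma Tr_nonempty: "u \<in> Tr n \<Longrightarrow> 1 \<le> n \<Longrightarrow> u \<noteq> []"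
  unfolding Tr_def by auto

lemma tr_path_dexter_le_iff:
  assumes u: "u \<in> Tr n" and u': "u' \<in> Tr n" and n: "1 \<le> n"
  shows "dexter_le (tr_path u) (tr_path u') \<longleftrightarrow> tr_le u u'"
proof
  assume le: "dexter_le (tr_path u) (tr_path u')"
  have "dyck (tr_path u)" using tr_path_in_F[OF u n] unfolding F_def by simp
  then have "list_all2 (\<le>) (code (tr_path u)) (code (tr_path u'))"
    using dexter_le_code[OF le] F_no_high_valley[OF tr_path_in_F[OF u n] n] by blast
  then have "list_all2 (\<le>) (pad u) (pad u')"
    unfolding code_tr_path[OF u n] code_tr_path[OF u' n] .
  then show "tr_le u u'"
    unfolding tr_le_iff_list_all2 using pad_le_imp_le Tr_nonempty u u' n by blast
next
  assume "tr_le u u'"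
  then show "dexter_le (tr_path u) (tr_path u')"
    using dexter_le_tr_path[OF u u'] unfolding tr_le_iff_list_all2 by blast
qed

theorem proposition1p4:
  fixes n :: nat
  assumes "n \<ge> 1"
  shows "bij_betw rho (F n) (Tr n) \<and>
         (\<forall>d \<in> F n. \<forall>d' \<in> F n. dexter_le d d' \<longleftrightarrow> tr_le (rho d) (rho d'))"
proof -
  have n: "1 \<le> n" using assms by simp
  have F: "F n = tr_path ` Tr n" using F_eq_tr_path_image[OF n] .
  have rho: "rho (tr_path u) = u" if "u \<in> Tr n" for u using rho_tr_path[OF that n] .
  have "bij_betw rho (tr_path ` Tr n) (Tr n)"
    by (rule bij_betw_byWitness[where f' = tr_path]) (auto simp: rho)
  moreover have "dexter_le (tr_path u) (tr_path u') \<longleftrightarrow> tr_le (rho (tr_path u)) (rho (tr_path u'))"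
    if "u \<in> Tr n" "u' \<in> Tr n" for u u'
    using tr_path_dexter_le_iff[OF that n] rho that by simp
  ultimately show ?thesis unfolding F by blast
qed

end
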